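(* Let $0<p\le 1$, $\epsilon>0$, $m\ge1$, let $\mathcal{C}\subseteq\mathbb{R}^m$ be a nonempty closed convex set, and let $f_p(\boldsymbol{z};\epsilon)=\sum_{i=1}^{m}(z_i^2+\epsilon^2)^{p/2}$. Consider the problem $\mathscr{P}_{\mathrm{sm}}(\epsilon)$: minimize $f_p(\boldsymbol{z};\epsilon)$ over $\boldsymbol{z}\in\mathcal{C}$. Generate a sequence by the iterative reweighted-$\ell_2$ algorithm: start with $\boldsymbol{\omega}^{[0]}=(1,\dots,1)$, and for $n=0,1,2,\dots$ set $$\boldsymbol{z}^{[n+1]}=\arg\min_{\boldsymbol{z}\in\mathcal{C}}\sum_{i=1}^{m}\omega_i^{[n]}z_i^2,\qquad \omega_i^{[n+1]}=\frac{p}{2}\left[\left(z_i^{[n+1]}\right)^2+\epsilon^2\right]^{\frac{p}{2}-1},\ i=1,\dots,m.$$ Then every limit point $\bar{\boldsymbol{z}}$ of $\{\boldsymbol{z}^{[n]}\}_{n\ge1}$ is a KKT point of $\mathscr{P}_{\mathrm{sm}}(\epsilon)$, and $f_p(\boldsymbol{z}^{[n]};\epsilon)$ converges monotonically (nonincreasingly) to $f_p(\boldsymbol{z}^{\star};\epsilon)$ for some KKT point $\boldsymbol{z}^{\star}$ of $\mathscr{P}_{\mathrm{sm}}(\epsilon)$.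
   Context: The normal cone of a convex set $\mathcal{C}$ at $\boldsymbol{z}\in\mathcal{C}$ is $\mathcal{N}_{\mathcal{C}}(\boldsymbol{z})=\{\boldsymbol{s}:\langle\boldsymbol{s},\boldsymbol{x}-\boldsymbol{z}\rangle\le0\ \forall\boldsymbol{x}\in\mathcal{C}\}$. A KKT point of $\mathscr{P}_{\mathrm{sm}}(\epsilon)$ is a point $\boldsymbol{z}\in\mathcal{C}$ with $0\in\nabla_{\boldsymbol{z}}f_p(\boldsymbol{z};\epsilon)+\mathcal{N}_{\mathcal{C}}(\boldsymbol{z})$. *)

theory Defs
  imports "HOL-Analysis.Analysis"
begin

definition fp :: "real \<Rightarrow> real \<Rightarrow> real ^ 'm \<Rightarrow> real" where
  "fp p \<epsilon> z = (\<Sum>i\<in>UNIV. ((z $ i)\<^sup>2 + \<epsilon>\<^sup>2) powr (p / 2))"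

definition normal_cone :: "(real ^ 'm) set \<Rightarrow> real ^ 'm \<Rightarrow> (real ^ 'm) set" where
  "normal_cone C z = {s. \<forall>x\<in>C. s \<bullet> (x - z) \<le> 0}"

text \<open>KKT point of min f over C: z in C and 0 in grad f(z) + N_C(z).
  The gradient is the vector g representing the Frechet derivative of f at z.\<close>
definition kkt_point :: "(real ^ 'm) set \<Rightarrow> (real ^ 'm \<Rightarrow> real) \<Rightarrow> real ^ 'm \<Rightarrow> bool" where
  "kkt_point C f z \<longleftrightarrow> z \<in> C \<and>
     (\<exists>g. (f has_derivative (\<lambda>h. g \<bullet> h)) (at z) \<and> -g \<in> normal_cone C z)"

end

theory Submission
  imports Defs
begin

text \<open>Each reweighting step is a majorize-minimize step. Since \<open>t \<mapsto> (t + \<epsilon>\<^sup>2) powr (p/2)\<close>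
  is concave for \<open>p \<le> 2\<close>, its tangent at \<open>u\<close> gives
  \<open>f v \<le> f u + (\<Sum>i. w u i * (v i\<^sup>2 - u i\<^sup>2))\<close> with the weights \<open>w\<close> of the algorithm, and the
  first-order optimality of the weighted least-squares step turns this into the descent estimate
  \<open>(\<Sum>i. w (z n) i * (z n i - z (n+1) i)\<^sup>2) \<le> f (z n) - f (z (n+1))\<close>. So \<open>f\<close> decreases along
  the iterates, which therefore stay bounded; on a bounded set the weights are bounded below, so
  consecutive iterates merge. Because \<open>\<nabla>f y = 2 w y y\<close>, the optimality condition of the
  weighted step passes in the limit to the KKT condition at every limit point.\<close>

definition irls_weight :: "real \<Rightarrow> real \<Rightarrow> real ^ 'm \<Rightarrow> real ^ 'm" where
  "irls_weight p \<epsilon> y = (\<chi> i. p / 2 * ((y $ i)\<^sup>2 + \<epsilon>\<^sup>2) powr (p / 2 - 1))"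

lemma irls_weight_nonneg: "0 \<le> p \<Longrightarrow> 0 \<le> irls_weight p \<epsilon> y $ i"
  by (simp add: irls_weight_def)

lemma powr_le_tangent:
  fixes u v a :: real
  assumes "0 < u" "0 < v" "0 \<le> a" "a \<le> 1"
  shows "v powr a \<le> u powr a + a * u powr (a - 1) * (v - u)"
proof -
  have young: "v powr a * u powr (1 - a) \<le> a * v + (1 - a) * u"
    using Youngs_inequality_0[of a "1 - a" v u] assms by simp
  have inv: "u powr (1 - a) * u powr (a - 1) = 1" and base: "u * u powr (a - 1) = u powr a"
    using assms by (simp_all add: powr_add[symmetric] powr_mult_base)
  have "v powr a = (v powr a * u powr (1 - a)) * u powr (a - 1)"
    using inv by (simp add: mult.assoc)
  also have "\<dots> \<le> (a * v + (1 - a) * u) * u powr (a - 1)"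
    using young assms by (intro mult_right_mono) auto
  also have "\<dots> = u powr a + a * u powr (a - 1) * (v - u)"
    using base by (simp add: algebra_simps)
  finally show ?thesis .
qed

lemma nonneg_if_quadratic_nonneg_near_0:
  fixes a b :: real
  assumes "\<And>t. 0 < t \<Longrightarrow> t \<le> 1 \<Longrightarrow> 0 \<le> t * a + t\<^sup>2 * b"
  shows "0 \<le> a"
proof (rule tendsto_lowerbound)
  show "((\<lambda>t. a + t * b) \<longlongrightarrow> a) (at_right 0)"
    by (auto intro!: tendsto_eq_intros)
  have "0 \<le> a + t * b" if "t \<in> {0<..<1}" for t
  proof -
    have "0 \<le> t * (a + t * b)"
      using assms[of t] that by (simp add: power2_eq_square algebra_simps)
    then show ?thesis using that by (simp add: zero_le_mult_iff)
  qed
  then show "\<forall>\<^sub>F t in at_right 0. 0 \<le> a + t * b"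
    using eventually_at_right_real[of 0 1] by (auto elim: eventually_mono)
qed simp

lemma weighted_sq_min_variational_ineq:
  fixes w :: "real ^ 'm" and C :: "(real ^ 'm) set"
  assumes "convex C" "z \<in> C" "x \<in> C"
    and min: "\<forall>y\<in>C. (\<Sum>i\<in>UNIV. w $ i * (z $ i)\<^sup>2) \<le> (\<Sum>i\<in>UNIV. w $ i * (y $ i)\<^sup>2)"
  shows "0 \<le> (\<Sum>i\<in>UNIV. w $ i * z $ i * (x $ i - z $ i))"
proof -
  define A where "A = (\<Sum>i\<in>UNIV. w $ i * z $ i * (x $ i - z $ i))"
  define B where "B = (\<Sum>i\<in>UNIV. w $ i * (x $ i - z $ i)\<^sup>2)"
  have "0 \<le> t * (2 * A) + t\<^sup>2 * B" if "0 < t" "t \<le> 1" for t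
  proof -
    have "z + t *\<^sub>R (x - z) = (1 - t) *\<^sub>R z + t *\<^sub>R x"
      by (simp add: algebra_simps)
    then have "z + t *\<^sub>R (x - z) \<in> C"
      using assms that convexD[of C z x "1 - t" t] by simp
    then have "(\<Sum>i\<in>UNIV. w $ i * (z $ i)\<^sup>2) \<le> (\<Sum>i\<in>UNIV. w $ i * ((z + t *\<^sub>R (x - z)) $ i)\<^sup>2)"
      using min by blast
    also have "\<dots> = (\<Sum>i\<in>UNIV. w $ i * (z $ i + t * (x $ i - z $ i))\<^sup>2)"
      by simp
    also have "\<dots> = (\<Sum>i\<in>UNIV. w $ i * (z $ i)\<^sup>2
        + t * 2 * (w $ i * z $ i * (x $ i - z $ i)) + t\<^sup>2 * (w $ i * (x $ i - z $ i)\<^sup>2))"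
      by (intro sum.cong) (auto simp: power2_eq_square algebra_simps)
    also have "\<dots> = (\<Sum>i\<in>UNIV. w $ i * (z $ i)\<^sup>2) + t * (2 * A) + t\<^sup>2 * B"
      by (simp add: sum.distrib sum_distrib_left A_def B_def mult.assoc)
    finally show ?thesis by simp
  qed
  then have "0 \<le> 2 * A"
    by (rule nonneg_if_quadratic_nonneg_near_0)
  then show ?thesis
    by (simp add: A_def)
qed

lemma fp_has_derivative:
  fixes y :: "real ^ 'm"
  assumes "\<epsilon> \<noteq> 0"
  shows "(fp p \<epsilon> has_derivative (\<lambda>h. (2 *\<^sub>R (irls_weight p \<epsilon> y * y)) \<bullet> h)) (at y)"
proof -
  have "((\<lambda>t. (t\<^sup>2 + \<epsilon>\<^sup>2) powr (p / 2)) has_real_derivative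
      2 * (p / 2 * (t\<^sup>2 + \<epsilon>\<^sup>2) powr (p / 2 - 1) * t)) (at t)" for t :: real
    using assms by (auto intro!: derivative_eq_intros simp: add_nonneg_pos)
  from DERIV_compose_FDERIV[OF this bounded_linear_imp_has_derivative[OF bounded_linear_vec_nth]]
  have "((\<lambda>y. \<Sum>i\<in>UNIV. ((y $ i)\<^sup>2 + \<epsilon>\<^sup>2) powr (p / 2)) has_derivative
      (\<lambda>h. \<Sum>i\<in>UNIV. h $ i * (2 * (p / 2 * ((y $ i)\<^sup>2 + \<epsilon>\<^sup>2) powr (p / 2 - 1) * y $ i)))) (at y)"
    by (intro has_derivative_sum)
  then show ?thesis
    by (simp add: fp_def[abs_def] irls_weight_def inner_vec_def mult.commute)
qed

lemma kkt_point_fpI: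
  assumes "\<epsilon> \<noteq> 0" "z \<in> C"
    and "\<forall>x\<in>C. 0 \<le> (\<Sum>i\<in>UNIV. irls_weight p \<epsilon> z $ i * z $ i * (x $ i - z $ i))"
  shows "kkt_point C (fp p \<epsilon>) z"
  unfolding kkt_point_def normal_cone_def
proof (intro conjI exI CollectI ballI)
  show "(fp p \<epsilon> has_derivative (\<lambda>h. (2 *\<^sub>R (irls_weight p \<epsilon> z * z)) \<bullet> h)) (at z)"
    using assms(1) by (rule fp_has_derivative)
  fix x assume "x \<in> C"
  then show "- (2 *\<^sub>R (irls_weight p \<epsilon> z * z)) \<bullet> (x - z) \<le> 0"
    using assms(3) by (simp add: inner_vec_def sum_negf mult.assoc flip: sum_distrib_left)
qed (fact assms(2))

lemma fp_le_weighted_majorant: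
  fixes u v :: "real ^ 'm"
  assumes "0 \<le> p" "p \<le> 2" "\<epsilon> \<noteq> 0"
  shows "fp p \<epsilon> v \<le> fp p \<epsilon> u + (\<Sum>i\<in>UNIV. irls_weight p \<epsilon> u $ i * ((v $ i)\<^sup>2 - (u $ i)\<^sup>2))"
proof -
  have "((v $ i)\<^sup>2 + \<epsilon>\<^sup>2) powr (p / 2) \<le> ((u $ i)\<^sup>2 + \<epsilon>\<^sup>2) powr (p / 2)
      + irls_weight p \<epsilon> u $ i * ((v $ i)\<^sup>2 - (u $ i)\<^sup>2)" for i
    using powr_le_tangent[of "(u $ i)\<^sup>2 + \<epsilon>\<^sup>2" "(v $ i)\<^sup>2 + \<epsilon>\<^sup>2" "p / 2"] assms
    by (simp add: irls_weight_def add_nonneg_pos)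
  then show ?thesis
    unfolding fp_def by (simp add: sum_mono flip: sum.distrib)
qed

lemma fp_irls_descent:
  fixes u v :: "real ^ 'm"
  assumes "0 \<le> p" "p \<le> 2" "\<epsilon> \<noteq> 0" "convex C" "u \<in> C" "v \<in> C"
    and min: "\<forall>y\<in>C. (\<Sum>i\<in>UNIV. irls_weight p \<epsilon> u $ i * (v $ i)\<^sup>2)
                  \<le> (\<Sum>i\<in>UNIV. irls_weight p \<epsilon> u $ i * (y $ i)\<^sup>2)"
  shows "(\<Sum>i\<in>UNIV. irls_weight p \<epsilon> u $ i * (u $ i - v $ i)\<^sup>2) \<le> fp p \<epsilon> u - fp p \<epsilon> v"
proof -
  let ?w = "irls_weight p \<epsilon> u"
  have "(\<Sum>i\<in>UNIV. ?w $ i * (u $ i - v $ i)\<^sup>2)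
      = (\<Sum>i\<in>UNIV. - (?w $ i * ((v $ i)\<^sup>2 - (u $ i)\<^sup>2)) - 2 * (?w $ i * v $ i * (u $ i - v $ i)))"
    by (intro sum.cong) (simp_all add: power2_eq_square algebra_simps)
  also have "\<dots> = - (\<Sum>i\<in>UNIV. ?w $ i * ((v $ i)\<^sup>2 - (u $ i)\<^sup>2))
      - 2 * (\<Sum>i\<in>UNIV. ?w $ i * v $ i * (u $ i - v $ i))"
    by (simp add: sum_subtractf sum_negf sum_distrib_left)
  moreover have "0 \<le> (\<Sum>i\<in>UNIV. ?w $ i * v $ i * (u $ i - v $ i))"
    using assms by (intro weighted_sq_min_variational_ineq) auto
  ultimately show ?thesis
    using fp_le_weighted_majorant[OF assms(1-3), of v u] by linarith
qed

lemma fp_nonneg: "0 \<le> fp p \<epsilon> y"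
  unfolding fp_def by (intro sum_nonneg) simp

lemma abs_nth_le_fp_powr:
  assumes "0 < p"
  shows "\<bar>y $ i\<bar> \<le> fp p \<epsilon> y powr (1 / p)"
proof -
  have sq: "(y $ i)\<^sup>2 = \<bar>y $ i\<bar> powr 2"
    using powr_realpow'[of "\<bar>y $ i\<bar>" 2] by simp
  have "\<bar>y $ i\<bar> powr p = (\<bar>y $ i\<bar> powr 2) powr (p / 2)"
    by (subst powr_powr) simp
  also have "\<dots> = ((y $ i)\<^sup>2) powr (p / 2)"
    by (simp only: sq)
  also have "\<dots> \<le> ((y $ i)\<^sup>2 + \<epsilon>\<^sup>2) powr (p / 2)"
    using assms by (intro powr_mono2) auto
  also have "\<dots> \<le> fp p \<epsilon> y"
    unfolding fp_def by (rule member_le_sum) auto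
  finally have "(\<bar>y $ i\<bar> powr p) powr (1 / p) \<le> fp p \<epsilon> y powr (1 / p)"
    using assms by (intro powr_mono2) auto
  then show ?thesis
    using assms by (simp add: powr_powr)
qed

lemma irls_weight_ge:
  assumes "0 \<le> p" "p \<le> 2" "\<epsilon> \<noteq> 0" "\<bar>y $ i\<bar> \<le> B"
  shows "p / 2 * (B\<^sup>2 + \<epsilon>\<^sup>2) powr (p / 2 - 1) \<le> irls_weight p \<epsilon> y $ i"
proof -
  have "(y $ i)\<^sup>2 \<le> B\<^sup>2"
    using assms(4) by (metis abs_ge_zero power2_abs power_mono)
  then have "(B\<^sup>2 + \<epsilon>\<^sup>2) powr (p / 2 - 1) \<le> ((y $ i)\<^sup>2 + \<epsilon>\<^sup>2) powr (p / 2 - 1)"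
    using assms by (intro powr_mono2') (auto simp: add_nonneg_pos)
  then show ?thesis
    using assms(1) by (simp add: irls_weight_def mult_left_mono)
qed

lemma tendsto_irls_weight:
  assumes "\<epsilon> \<noteq> 0" "(f \<longlongrightarrow> l) F"
  shows "((\<lambda>n. irls_weight p \<epsilon> (f n)) \<longlongrightarrow> irls_weight p \<epsilon> l) F"
  unfolding irls_weight_def using assms
  by (intro tendsto_intros) (auto simp: add_nonneg_pos)

locale irls_iteration =
  fixes p \<epsilon> :: real and C :: "(real ^ 'm) set" and x :: "nat \<Rightarrow> real ^ 'm"
  assumes exponent: "0 < p" "p \<le> 2"
    and smoothing: "\<epsilon> \<noteq> 0"
    and convex: "convex C" and closed: "closed C"
    and start: "x 0 \<in> C"
    and step: "\<And>n. x (Suc n) \<in> C \<and>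
      (\<forall>y\<in>C. (\<Sum>i\<in>UNIV. irls_weight p \<epsilon> (x n) $ i * (x (Suc n) $ i)\<^sup>2)
               \<le> (\<Sum>i\<in>UNIV. irls_weight p \<epsilon> (x n) $ i * (y $ i)\<^sup>2))"
begin

lemma iterate_in_C: "x n \<in> C"
  using start step by (cases n) auto

lemma fp_decrease_ge_weighted_step:
  "(\<Sum>i\<in>UNIV. irls_weight p \<epsilon> (x n) $ i * (x n $ i - x (Suc n) $ i)\<^sup>2)
     \<le> fp p \<epsilon> (x n) - fp p \<epsilon> (x (Suc n))"
  using exponent smoothing convex iterate_in_C step[of n] by (intro fp_irls_descent) auto

lemma decseq_fp: "decseq (\<lambda>n. fp p \<epsilon> (x n))"
proof (rule decseq_SucI)
  fix n
  have "0 \<le> (\<Sum>i\<in>UNIV. irls_weight p \<epsilon> (x n) $ i * (x n $ i - x (Suc n) $ i)\<^sup>2)"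
    using exponent by (simp add: sum_nonneg irls_weight_nonneg)
  then show "fp p \<epsilon> (x (Suc n)) \<le> fp p \<epsilon> (x n)"
    using fp_decrease_ge_weighted_step[of n] by linarith
qed

lemma fp_convergent: obtains L where "(\<lambda>n. fp p \<epsilon> (x n)) \<longlonglongrightarrow> L"
  using decseq_convergent[OF decseq_fp, of 0] by (auto simp: fp_nonneg)

lemma iterate_bounded: "\<bar>x n $ i\<bar> \<le> fp p \<epsilon> (x 0) powr (1 / p)"
proof -
  have "fp p \<epsilon> (x n) powr (1 / p) \<le> fp p \<epsilon> (x 0) powr (1 / p)"
    using exponent decseq_fp fp_nonneg by (intro powr_mono2) (auto simp: decseq_def)
  then show ?thesis
    using abs_nth_le_fp_powr[OF exponent(1), of "x n" i \<epsilon>] by linarith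
qed

lemma weights_uniformly_positive: obtains c where "0 < c" "\<forall>n i. c \<le> irls_weight p \<epsilon> (x n) $ i"
proof
  let ?B = "fp p \<epsilon> (x 0) powr (1 / p)"
  show "0 < p / 2 * (?B\<^sup>2 + \<epsilon>\<^sup>2) powr (p / 2 - 1)"
    using exponent smoothing by (simp add: add_nonneg_pos)
  show "\<forall>n i. p / 2 * (?B\<^sup>2 + \<epsilon>\<^sup>2) powr (p / 2 - 1) \<le> irls_weight p \<epsilon> (x n) $ i"
    using exponent smoothing iterate_bounded by (intro allI irls_weight_ge) auto
qed

lemma successive_iterates_diff_tendsto_0: "(\<lambda>n. x n - x (Suc n)) \<longlonglongrightarrow> 0"
proof -
  obtain c where c: "0 < c" "\<forall>n i. c \<le> irls_weight p \<epsilon> (x n) $ i"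
    by (rule weights_uniformly_positive)
  obtain L where L: "(\<lambda>n. fp p \<epsilon> (x n)) \<longlonglongrightarrow> L"
    by (rule fp_convergent)
  have bound: "(norm (x n - x (Suc n)))\<^sup>2 \<le> (fp p \<epsilon> (x n) - fp p \<epsilon> (x (Suc n))) / c" for n
  proof -
    have "c * (norm (x n - x (Suc n)))\<^sup>2 = (\<Sum>i\<in>UNIV. c * (x n $ i - x (Suc n) $ i)\<^sup>2)"
      unfolding power2_norm_eq_inner inner_vec_def by (simp add: sum_distrib_left power2_eq_square)
    also have "\<dots> \<le> (\<Sum>i\<in>UNIV. irls_weight p \<epsilon> (x n) $ i * (x n $ i - x (Suc n) $ i)\<^sup>2)"
      using c(2) by (simp add: sum_mono mult_right_mono)
    also have "\<dots> \<le> fp p \<epsilon> (x n) - fp p \<epsilon> (x (Suc n))"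
      by (rule fp_decrease_ge_weighted_step)
    finally show ?thesis
      using c(1) by (simp add: pos_le_divide_eq mult.commute)
  qed
  have "(\<lambda>n. (fp p \<epsilon> (x n) - fp p \<epsilon> (x (Suc n))) / c) \<longlonglongrightarrow> (L - L) / c"
    using c(1) by (intro tendsto_divide tendsto_diff L LIMSEQ_Suc[OF L]) auto
  then have decrement: "(\<lambda>n. (fp p \<epsilon> (x n) - fp p \<epsilon> (x (Suc n))) / c) \<longlonglongrightarrow> 0"
    by simp
  have "(\<lambda>n. (norm (x n - x (Suc n)))\<^sup>2) \<longlonglongrightarrow> 0"
    by (rule tendsto_sandwich[OF always_eventually always_eventually tendsto_const decrement]) (simp_all add: bound)
  then have "(\<lambda>n. sqrt ((norm (x n - x (Suc n)))\<^sup>2)) \<longlonglongrightarrow> sqrt 0"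
    by (rule tendsto_real_sqrt)
  then have "(\<lambda>n. norm (x n - x (Suc n))) \<longlonglongrightarrow> 0"
    by simp
  then show ?thesis
    by (rule tendsto_norm_zero_cancel)
qed

lemma limit_point_kkt:
  assumes "strict_mono r" and lim: "(x \<circ> r) \<longlonglongrightarrow> l"
  shows "kkt_point C (fp p \<epsilon>) l"
proof (rule kkt_point_fpI[OF smoothing])
  show "l \<in> C"
    using closed_sequentially[OF closed _ lim] iterate_in_C by auto
  have lim_next: "(\<lambda>k. x (Suc (r k))) \<longlonglongrightarrow> l"
  proof -
    have "(\<lambda>k. x (r k) - x (Suc (r k))) \<longlonglongrightarrow> 0"
      using LIMSEQ_subseq_LIMSEQ[OF successive_iterates_diff_tendsto_0 assms(1)] by (simp add: o_def)
    from tendsto_diff[OF lim[unfolded o_def] this] show ?thesis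
      by simp
  qed
  show "\<forall>y\<in>C. 0 \<le> (\<Sum>i\<in>UNIV. irls_weight p \<epsilon> l $ i * l $ i * (y $ i - l $ i))"
  proof
    fix y assume "y \<in> C"
    show "0 \<le> (\<Sum>i\<in>UNIV. irls_weight p \<epsilon> l $ i * l $ i * (y $ i - l $ i))"
    proof (rule LIMSEQ_le_const)
      show "(\<lambda>k. \<Sum>i\<in>UNIV. irls_weight p \<epsilon> (x (r k)) $ i * x (Suc (r k)) $ i * (y $ i - x (Suc (r k)) $ i))
          \<longlonglongrightarrow> (\<Sum>i\<in>UNIV. irls_weight p \<epsilon> l $ i * l $ i * (y $ i - l $ i))"
        using tendsto_irls_weight[OF smoothing lim[unfolded o_def]] lim_next
        by (intro tendsto_intros)
      show "\<exists>N. \<forall>k\<ge>N. 0 \<le> (\<Sum>i\<in>UNIV. irls_weight p \<epsilon> (x (r k)) $ i * x (Suc (r k)) $ i * (y $ i - x (Suc (r k)) $ i))"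
        using convex step \<open>y \<in> C\<close> by (intro exI allI impI weighted_sq_min_variational_ineq) auto
    qed
  qed
qed

lemma fp_tendsto_kkt_value: "\<exists>l. kkt_point C (fp p \<epsilon>) l \<and> (\<lambda>n. fp p \<epsilon> (x n)) \<longlonglongrightarrow> fp p \<epsilon> l"
proof -
  have "bounded (range x)"
  proof (rule boundedI)
    fix y assume "y \<in> range x"
    then obtain n where "y = x n" by blast
    have "norm y \<le> (\<Sum>i\<in>UNIV. \<bar>y $ i\<bar>)"
      by (rule norm_le_l1_cart)
    also have "\<dots> \<le> (\<Sum>i\<in>(UNIV :: 'm set). fp p \<epsilon> (x 0) powr (1 / p))"
      unfolding \<open>y = x n\<close> by (intro sum_mono iterate_bounded)
    finally show "norm y \<le> (\<Sum>i\<in>(UNIV :: 'm set). fp p \<epsilon> (x 0) powr (1 / p))" .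
  qed
  then obtain l r where r: "strict_mono r" and lim: "(x \<circ> r) \<longlonglongrightarrow> l"
    using bounded_imp_convergent_subsequence by blast
  obtain L where L: "(\<lambda>n. fp p \<epsilon> (x n)) \<longlonglongrightarrow> L"
    by (rule fp_convergent)
  have "isCont (fp p \<epsilon>) l"
    by (rule has_derivative_continuous[OF fp_has_derivative[OF smoothing]])
  from isCont_tendsto_compose[OF this lim[unfolded o_def]]
  have "(\<lambda>k. fp p \<epsilon> (x (r k))) \<longlonglongrightarrow> fp p \<epsilon> l" .
  moreover have "(\<lambda>k. fp p \<epsilon> (x (r k))) \<longlonglongrightarrow> L"
    using LIMSEQ_subseq_LIMSEQ[OF L r] by (simp add: o_def)
  ultimately have "L = fp p \<epsilon> l"
    using LIMSEQ_unique by blast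
  then show ?thesis
    using L limit_point_kkt[OF r lim] by blast
qed

end

theorem theorem2:
  fixes p \<epsilon> :: real
    and C :: "(real ^ 'm) set"
    and z \<omega> :: "nat \<Rightarrow> real ^ 'm"
  assumes "0 < p" "p \<le> 1" "0 < \<epsilon>"
    and "C \<noteq> {}" "closed C" "convex C"
    and "\<omega> 0 = (\<chi> i. 1)"
    and "\<And>n. z (Suc n) \<in> C \<and>
           (\<forall>y\<in>C. (\<Sum>i\<in>UNIV. \<omega> n $ i * (z (Suc n) $ i)\<^sup>2) \<le> (\<Sum>i\<in>UNIV. \<omega> n $ i * (y $ i)\<^sup>2))"
    and "\<And>n i. \<omega> (Suc n) $ i = p / 2 * ((z (Suc n) $ i)\<^sup>2 + \<epsilon>\<^sup>2) powr (p / 2 - 1)"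
  shows "(\<forall>zbar r. strict_mono r \<and> (\<forall>k. 1 \<le> r k) \<and> (z \<circ> r) \<longlonglongrightarrow> zbar
             \<longrightarrow> kkt_point C (fp p \<epsilon>) zbar)
       \<and> (\<forall>n\<ge>1. fp p \<epsilon> (z (Suc n)) \<le> fp p \<epsilon> (z n))
       \<and> (\<exists>zstar. kkt_point C (fp p \<epsilon>) zstar \<and>
             (\<lambda>n. fp p \<epsilon> (z n)) \<longlonglongrightarrow> fp p \<epsilon> zstar)"
proof -
  have "\<omega> (Suc n) = irls_weight p \<epsilon> (z (Suc n))" for n
    using assms(9) by (simp add: vec_eq_iff irls_weight_def)
  \<comment> \<open>The iteration is run from \<open>z 1\<close>; the initial weights \<open>\<omega> 0\<close> only serve to produce \<open>z 1 \<in> C\<close>.\<close>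
  then interpret irls_iteration p \<epsilon> C "\<lambda>n. z (Suc n)"
    using assms(1-3,5,6) assms(8)[of 0] assms(8)[of "Suc n" for n] by unfold_locales simp_all
  have "kkt_point C (fp p \<epsilon>) zbar"
    if "strict_mono r" "\<forall>k. 1 \<le> r k" "(z \<circ> r) \<longlonglongrightarrow> zbar" for zbar r
  proof (rule limit_point_kkt)
    show "strict_mono (\<lambda>k. r k - 1)"
      using that(1,2) by (auto simp: strict_mono_def intro!: diff_less_mono)
    have "(\<lambda>n. z (Suc n)) \<circ> (\<lambda>k. r k - 1) = z \<circ> r"
      using that(2) by (auto simp: fun_eq_iff Suc_le_eq)
    then show "((\<lambda>n. z (Suc n)) \<circ> (\<lambda>k. r k - 1)) \<longlonglongrightarrow> zbar"
      using that(3) by simp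
  qed
  moreover have "fp p \<epsilon> (z (Suc n)) \<le> fp p \<epsilon> (z n)" if "n \<ge> 1" for n
    using decseq_SucD[OF decseq_fp, of "n - 1"] that by simp
  moreover obtain zstar where "kkt_point C (fp p \<epsilon>) zstar"
    and "(\<lambda>n. fp p \<epsilon> (z (Suc n))) \<longlonglongrightarrow> fp p \<epsilon> zstar"
    using fp_tendsto_kkt_value by blast
  ultimately show ?thesis
    using LIMSEQ_imp_Suc[of "\<lambda>n. fp p \<epsilon> (z n)"] by blast
qed

end
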